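(* Let $n\times n$ $(0,1)$ matrices $A=\begin{bmatrix} 0 & J_{k_1,k_2} & X_1\\ J_{k_1,k_2} & 0 & X_2\\ X_3 & X_4 & Y\end{bmatrix}$ and $B=\begin{bmatrix} J_{k_1,k_2} & 0 & X_1\\ 0 & J_{k_1,k_2} & X_2\\ X_3 & X_4 & Y\end{bmatrix}$ (with $k_1,k_2>0$, $\mathbf{1}^TX_1=\mathbf{1}^TX_2$, $X_3\mathbf{1}=X_4\mathbf{1}$) be Gram mates with all distinct singular values, where $\mathrm{rank}(A-B)=1$. Then, $A$ and $B$ are isomorphic if and only if the remaining matrix $Y$ is fixable.
   Context: $J_{p,q}$ is the $p\times q$ all-ones matrix. Two $(0,1)$ matrices $A\neq B$ are Gram mates if $AA^T=BB^T$ and $A^TA=B^TB$; isomorphic if $B=PAQ$ for permutation matrices $P,Q$. For $(0,1)$ matrices $Z_1,Z_2$ of equal size, $\mathcal R_{Z_1,Z_2}$ is the set of triples $(P_1,P_2,Q)$ of permutation matrices with $Z_2=P_1Z_1Q$ and $Z_1=P_2Z_2Q$, and $\mathcal L_{Z_1,Z_2}$ is the set of triples $(P,Q_1,Q_2)$ of permutation matrices with $Z_1=PZ_1Q_1$ and $Z_2=PZ_2Q_2$. $Y$ is fixable if there exist permutation matrices $P,Q$ with $Y=PYQ$ such that either (i) $(P_1,P_2,Q)\in\mathcal R_{X_1,X_2}$ and $(P,Q_3,Q_4)\in\mathcal L_{X_3,X_4}$ for some $P_1,P_2,Q_3,Q_4$, or (ii) $(Q_3,Q_4,P^T)\in\mathcal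 R_{X_3^T,X_4^T}$ and $(Q^T,P_1,P_2)\in\mathcal L_{X_1^T,X_2^T}$ for some $P_1,P_2,Q_3,Q_4$. *)

theory Defs
  imports "Jordan_Normal_Form.DL_Rank" "Jordan_Normal_Form.Char_Poly"
begin

definition zo_mat :: "nat \<Rightarrow> nat \<Rightarrow> real mat \<Rightarrow> bool" where
  "zo_mat m n M \<longleftrightarrow> M \<in> carrier_mat m n \<and> (\<forall>i<m. \<forall>j<n. M $$ (i,j) \<in> {0,1})"

definition ones_mat :: "nat \<Rightarrow> nat \<Rightarrow> real mat" where
  "ones_mat p q = mat p q (\<lambda>_. 1)"

definition ones_vec :: "nat \<Rightarrow> real vec" where
  "ones_vec n = vec n (\<lambda>_. 1)"

definition hcat :: "real mat \<Rightarrow> real mat \<Rightarrow> real mat" where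
  "hcat M N = four_block_mat M N (0\<^sub>m 0 (dim_col M)) (0\<^sub>m 0 (dim_col N))"

definition block3 :: "real mat \<Rightarrow> real mat \<Rightarrow> real mat \<Rightarrow> real mat \<Rightarrow> real mat \<Rightarrow> real mat
   \<Rightarrow> real mat \<Rightarrow> real mat \<Rightarrow> real mat \<Rightarrow> real mat" where
  "block3 M11 M12 M13 M21 M22 M23 M31 M32 M33 =
     hcat M11 (hcat M12 M13) @\<^sub>r hcat M21 (hcat M22 M23) @\<^sub>r hcat M31 (hcat M32 M33)"

definition perm_mat :: "nat \<Rightarrow> real mat \<Rightarrow> bool" where
  "perm_mat m P \<longleftrightarrow> (\<exists>\<sigma>. \<sigma> permutes {..<m} \<and> P = mat m m (\<lambda>(i,j). if \<sigma> i = j then 1 else 0))"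

definition gram_mates :: "real mat \<Rightarrow> real mat \<Rightarrow> bool" where
  "gram_mates A B \<longleftrightarrow> A \<noteq> B \<and> A * transpose_mat A = B * transpose_mat B
      \<and> transpose_mat A * A = transpose_mat B * B"

definition isomorphic :: "nat \<Rightarrow> nat \<Rightarrow> real mat \<Rightarrow> real mat \<Rightarrow> bool" where
  "isomorphic m n A B \<longleftrightarrow> (\<exists>P Q. perm_mat m P \<and> perm_mat n Q \<and> B = P * A * Q)"

(* multiplicity of s \<ge> 0 as a singular value of A: algebraic multiplicity of s^2
   as an eigenvalue of A^T A *)
definition sv_mult :: "real mat \<Rightarrow> real \<Rightarrow> nat" where
  "sv_mult A s = order (s^2) (char_poly (transpose_mat A * A))"

definition distinct_singular_values :: "real mat \<Rightarrow> bool" where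
  "distinct_singular_values A \<longleftrightarrow> (\<forall>s\<ge>0. sv_mult A s \<le> 1)"

definition R_set :: "nat \<Rightarrow> nat \<Rightarrow> real mat \<Rightarrow> real mat \<Rightarrow> (real mat \<times> real mat \<times> real mat) set" where
  "R_set p q Z1 Z2 = {(P1,P2,Q). perm_mat p P1 \<and> perm_mat p P2 \<and> perm_mat q Q
      \<and> Z2 = P1 * Z1 * Q \<and> Z1 = P2 * Z2 * Q}"

definition L_set :: "nat \<Rightarrow> nat \<Rightarrow> real mat \<Rightarrow> real mat \<Rightarrow> (real mat \<times> real mat \<times> real mat) set" where
  "L_set p q Z1 Z2 = {(P,Q1,Q2). perm_mat p P \<and> perm_mat q Q1 \<and> perm_mat q Q2
      \<and> Z1 = P * Z1 * Q1 \<and> Z2 = P * Z2 * Q2}"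

definition fixable :: "nat \<Rightarrow> nat \<Rightarrow> nat \<Rightarrow> nat \<Rightarrow> real mat \<Rightarrow> real mat \<Rightarrow> real mat \<Rightarrow> real mat
    \<Rightarrow> real mat \<Rightarrow> bool" where
  "fixable k1 k2 r c X1 X2 X3 X4 Y \<longleftrightarrow>
     (\<exists>P Q. perm_mat r P \<and> perm_mat c Q \<and> Y = P * Y * Q \<and>
        ((\<exists>P1 P2 Q3 Q4. (P1,P2,Q) \<in> R_set k1 c X1 X2 \<and> (P,Q3,Q4) \<in> L_set r k2 X3 X4)
         \<or> (\<exists>P1 P2 Q3 Q4. (Q3,Q4,transpose_mat P) \<in> R_set k2 r (transpose_mat X3) (transpose_mat X4)
                  \<and> (transpose_mat Q,P1,P2) \<in> L_set c k1 (transpose_mat X1) (transpose_mat X2))))"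

end

(*
  Let z be the vector that is 1 on the first k2 coordinates, -1 on the next k2 and 0 on the
  rest, and w the analogous vector for the two row blocks of size k1.  Because X3 and X4 have
  equal row sums, A z = -k2 w and B z = k2 w; because X1 and X2 have equal column sums,
  A^T w = -k1 z.  Hence z is an eigenvector of A^T A for the eigenvalue k1 k2, which is simple
  since the singular values of A are distinct.  If B = P A Q with permutation matrices, then
  A^T A = B^T B makes Q z an eigenvector for the same eigenvalue, so Q z = s z with s = 1 or
  s = -1, and then P w = -s w.  Thus P and Q respect the block structure: for s = 1 the column
  blocks stay in place and the two row blocks are exchanged, for s = -1 it is the other way
  round.  Comparing the blocks of B and of P A Q gives exactly the two alternatives in the
  definition of fixability, and conversely the permutations provided by fixability assemble
  into such block permutations.
*)
theory Submission
  imports Defs "Jordan_Normal_Form.Jordan_Normal_Form_Uniqueness"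
    "Jordan_Normal_Form.Jordan_Normal_Form_Existence"
begin

section \<open>Reindexing by permutations\<close>

lemma permutes_lessThan_iff: "\<sigma> permutes {..<m} \<Longrightarrow> \<sigma> i < m \<longleftrightarrow> i < m"
  using permutes_in_image[of \<sigma> "{..<m}" i] by simp

definition reindex_mat :: "(nat \<Rightarrow> nat) \<Rightarrow> (nat \<Rightarrow> nat) \<Rightarrow> 'a mat \<Rightarrow> 'a mat" where
  "reindex_mat f g M = mat (dim_row M) (dim_col M) (\<lambda>(i,j). M $$ (f i, g j))"

lemma reindex_mat_carrier [simp]: "reindex_mat f g M \<in> carrier_mat (dim_row M) (dim_col M)"
  and dim_reindex_mat [simp]: "dim_row (reindex_mat f g M) = dim_row M" "dim_col (reindex_mat f g M) = dim_col M"
  by (simp_all add: reindex_mat_def)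

lemma reindex_mat_carrier_mat [simp]: "M \<in> carrier_mat a b \<Longrightarrow> reindex_mat f g M \<in> carrier_mat a b"
  by (auto simp: reindex_mat_def)

lemma index_reindex_mat [simp]:
  "i < dim_row M \<Longrightarrow> j < dim_col M \<Longrightarrow> reindex_mat f g M $$ (i,j) = M $$ (f i, g j)"
  by (simp add: reindex_mat_def)

lemma reindex_mat_reindex_mat:
  assumes "\<And>i. i < dim_row M \<Longrightarrow> f i < dim_row M" and "\<And>j. j < dim_col M \<Longrightarrow> g j < dim_col M"
  shows "reindex_mat f g (reindex_mat f' g' M) = reindex_mat (f' \<circ> f) (g' \<circ> g) M"
  using assms by (intro eq_matI) simp_all

lemma transpose_reindex_mat:
  assumes "\<And>i. i < dim_row M \<Longrightarrow> f i < dim_row M" and "\<And>j. j < dim_col M \<Longrightarrow> g j < dim_col M"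
  shows "transpose_mat (reindex_mat f g M) = reindex_mat g f (transpose_mat M)"
  using assms by (intro eq_matI) simp_all

lemma transpose_eq_reindex_mat_iff:
  assumes f: "f permutes {..<a}" and g: "g permutes {..<b}" and N: "N \<in> carrier_mat a b"
  shows "transpose_mat M = reindex_mat g f (transpose_mat N) \<longleftrightarrow> M = reindex_mat f g N"
proof -
  have "reindex_mat g f (transpose_mat N) = transpose_mat (reindex_mat f g N)"
    using N permutes_lessThan_iff[OF f] permutes_lessThan_iff[OF g] by (subst transpose_reindex_mat) auto
  then show ?thesis by (metis transpose_transpose)
qed

lemma reindex_mat_mult_vec:
  assumes M: "M \<in> carrier_mat m n" and v: "v \<in> carrier_vec n"
    and \<pi>: "\<pi> permutes {..<m}" and \<phi>: "\<phi> permutes {..<n}"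
  shows "reindex_mat \<pi> \<phi> M *\<^sub>v vec n (\<lambda>j. v $ \<phi> j) = vec m (\<lambda>i. (M *\<^sub>v v) $ \<pi> i)"
proof (rule eq_vecI)
  fix i assume "i < dim_vec (vec m (\<lambda>i. (M *\<^sub>v v) $ \<pi> i))"
  then have i: "i < m" and \<pi>i: "\<pi> i < m" using permutes_lessThan_iff[OF \<pi>] by auto
  have "(reindex_mat \<pi> \<phi> M *\<^sub>v vec n (\<lambda>j. v $ \<phi> j)) $ i = (\<Sum>j<n. M $$ (\<pi> i, \<phi> j) * v $ \<phi> j)"
    using M i by (simp add: scalar_prod_def atLeast0LessThan)
  also have "\<dots> = (\<Sum>j<n. M $$ (\<pi> i, j) * v $ j)"
    using sum.permute[OF \<phi>, of "\<lambda>j. M $$ (\<pi> i, j) * v $ j"] by simp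
  also have "\<dots> = (M *\<^sub>v v) $ \<pi> i"
    using M v \<pi>i by (simp add: scalar_prod_def atLeast0LessThan)
  finally show "(reindex_mat \<pi> \<phi> M *\<^sub>v vec n (\<lambda>j. v $ \<phi> j)) $ i = vec m (\<lambda>i. (M *\<^sub>v v) $ \<pi> i) $ i"
    using i by simp
qed (use M in simp)

lemma transpose_reindex_mat_mult_self:
  assumes M: "M \<in> carrier_mat m n" and \<pi>: "\<pi> permutes {..<m}" and \<phi>: "\<phi> permutes {..<n}"
  shows "transpose_mat (reindex_mat \<pi> \<phi> M) * reindex_mat \<pi> \<phi> M = reindex_mat \<phi> \<phi> (transpose_mat M * M)"
proof (rule eq_matI)
  fix i j assume "i < dim_row (reindex_mat \<phi> \<phi> (transpose_mat M * M))"
    and "j < dim_col (reindex_mat \<phi> \<phi> (transpose_mat M * M))"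
  then have i: "i < n" and j: "j < n" and \<phi>ij: "\<phi> i < n" "\<phi> j < n"
    using M permutes_lessThan_iff[OF \<phi>] by auto
  have "(transpose_mat (reindex_mat \<pi> \<phi> M) * reindex_mat \<pi> \<phi> M) $$ (i, j)
      = (\<Sum>k<m. M $$ (\<pi> k, \<phi> i) * M $$ (\<pi> k, \<phi> j))"
    using M i j by (simp add: scalar_prod_def atLeast0LessThan)
  also have "\<dots> = (\<Sum>k<m. M $$ (k, \<phi> i) * M $$ (k, \<phi> j))"
    using sum.permute[OF \<pi>, of "\<lambda>k. M $$ (k, \<phi> i) * M $$ (k, \<phi> j)"] by simp
  also have "\<dots> = reindex_mat \<phi> \<phi> (transpose_mat M * M) $$ (i, j)"
    using M i j \<phi>ij by (simp add: scalar_prod_def atLeast0LessThan)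
  finally show "(transpose_mat (reindex_mat \<pi> \<phi> M) * reindex_mat \<pi> \<phi> M) $$ (i, j)
      = reindex_mat \<phi> \<phi> (transpose_mat M * M) $$ (i, j)" .
qed (use M in simp_all)

definition perm_matrix :: "nat \<Rightarrow> (nat \<Rightarrow> nat) \<Rightarrow> 'a :: semiring_1 mat" where
  "perm_matrix m \<sigma> = mat m m (\<lambda>(i,j). if \<sigma> i = j then 1 else 0)"

lemma perm_matrix_carrier [simp]: "perm_matrix m \<sigma> \<in> carrier_mat m m"
  and dim_perm_matrix [simp]: "dim_row (perm_matrix m \<sigma>) = m" "dim_col (perm_matrix m \<sigma>) = m"
  by (simp_all add: perm_matrix_def)

lemma perm_matrix_mult:
  assumes "\<sigma> permutes {..<m}" and "W \<in> carrier_mat m k"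
  shows "perm_matrix m \<sigma> * W = reindex_mat \<sigma> id W"
proof (rule eq_matI)
  fix i j assume "i < dim_row (reindex_mat \<sigma> id W)" and "j < dim_col (reindex_mat \<sigma> id W)"
  then have i: "i < m" and j: "j < k" using assms(2) by auto
  then have "\<sigma> i < m" using permutes_in_image[OF assms(1)] by simp
  then show "(perm_matrix m \<sigma> * W) $$ (i,j) = reindex_mat \<sigma> id W $$ (i,j)"
    using i j assms(2) by (simp add: perm_matrix_def scalar_prod_def if_distrib[of "\<lambda>x. x * _"] cong: if_cong)
qed (use assms in auto)

lemma mult_transpose_perm_matrix:
  assumes "\<psi> permutes {..<m}" and "W \<in> carrier_mat k m"
  shows "W * transpose_mat (perm_matrix m \<psi>) = reindex_mat id \<psi> W"
proof (rule eq_matI)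
  fix i j assume "i < dim_row (reindex_mat id \<psi> W)" and "j < dim_col (reindex_mat id \<psi> W)"
  then have i: "i < k" and j: "j < m" using assms(2) by auto
  then have "\<psi> j < m" using permutes_in_image[OF assms(1)] by simp
  then show "(W * transpose_mat (perm_matrix m \<psi>)) $$ (i,j) = reindex_mat id \<psi> W $$ (i,j)"
    using i j assms(2) by (simp add: perm_matrix_def scalar_prod_def if_distrib[of "\<lambda>x. _ * x"] cong: if_cong)
qed (use assms in auto)

lemma transpose_perm_matrix:
  assumes "\<sigma> permutes {..<m}"
  shows "transpose_mat (perm_matrix m \<sigma>) = perm_matrix m (inv_into UNIV \<sigma>)"
  using permutes_inv_eq[OF assms] by (intro eq_matI) (auto simp: perm_matrix_def)

lemma perm_matrix_sandwich:
  assumes "\<rho> permutes {..<a}" and "\<psi> permutes {..<b}" and "W \<in> carrier_mat a b"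
  shows "perm_matrix a \<rho> * W * transpose_mat (perm_matrix b \<psi>) = reindex_mat \<rho> \<psi> W"
proof -
  have "perm_matrix a \<rho> * W = reindex_mat \<rho> id W"
    by (rule perm_matrix_mult[OF assms(1,3)])
  moreover have "reindex_mat \<rho> id W * transpose_mat (perm_matrix b \<psi>) = reindex_mat id \<psi> (reindex_mat \<rho> id W)"
    by (rule mult_transpose_perm_matrix[OF assms(2)]) (use assms(3) in auto)
  moreover have "reindex_mat id \<psi> (reindex_mat \<rho> id W) = reindex_mat \<rho> \<psi> W"
    using assms(3) permutes_in_image[OF assms(2)] by (subst reindex_mat_reindex_mat) auto
  ultimately show ?thesis by simp
qed

lemma perm_mat_iff: "perm_mat m P \<longleftrightarrow> (\<exists>\<sigma>. \<sigma> permutes {..<m} \<and> P = perm_matrix m \<sigma>)"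
  unfolding perm_mat_def perm_matrix_def ..

lemma perm_mat_iff_transpose:
  "perm_mat m P \<longleftrightarrow> (\<exists>\<sigma>. \<sigma> permutes {..<m} \<and> P = transpose_mat (perm_matrix m \<sigma>))"
proof
  assume "perm_mat m P"
  then obtain \<sigma> where \<sigma>: "\<sigma> permutes {..<m}" and "P = perm_matrix m \<sigma>"
    by (auto simp: perm_mat_iff)
  then have "P = transpose_mat (perm_matrix m (inv_into UNIV \<sigma>))"
    by (simp add: transpose_perm_matrix permutes_inv permutes_inv_inv)
  then show "\<exists>\<sigma>. \<sigma> permutes {..<m} \<and> P = transpose_mat (perm_matrix m \<sigma>)"
    using permutes_inv[OF \<sigma>] by blast
next
  assume "\<exists>\<sigma>. \<sigma> permutes {..<m} \<and> P = transpose_mat (perm_matrix m \<sigma>)"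
  then obtain \<sigma> where \<sigma>: "\<sigma> permutes {..<m}" and "P = transpose_mat (perm_matrix m \<sigma>)"
    by blast
  then have "P = perm_matrix m (inv_into UNIV \<sigma>)" by (simp add: transpose_perm_matrix)
  then show "perm_mat m P" unfolding perm_mat_iff using permutes_inv[OF \<sigma>] by blast
qed

lemma isomorphic_iff_reindex_mat:
  assumes "A \<in> carrier_mat m n"
  shows "isomorphic m n A B \<longleftrightarrow>
    (\<exists>\<pi> \<phi>. \<pi> permutes {..<m} \<and> \<phi> permutes {..<n} \<and> B = reindex_mat \<pi> \<phi> A)"
proof -
  have "B = perm_matrix m \<pi> * A * transpose_mat (perm_matrix n \<phi>) \<longleftrightarrow> B = reindex_mat \<pi> \<phi> A"
    if "\<pi> permutes {..<m}" and "\<phi> permutes {..<n}" for \<pi> \<phi>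
    using perm_matrix_sandwich[OF that assms] by simp
  then show ?thesis
    unfolding isomorphic_def perm_mat_iff[of m] perm_mat_iff_transpose[of n] by blast
qed

lemma ex_R_set_iff:
  assumes \<psi>: "\<psi> permutes {..<q}" and Z: "Z1 \<in> carrier_mat p q" "Z2 \<in> carrier_mat p q"
  shows "(\<exists>P1 P2. (P1, P2, transpose_mat (perm_matrix q \<psi>)) \<in> R_set p q Z1 Z2) \<longleftrightarrow>
    (\<exists>\<alpha> \<beta>. \<alpha> permutes {..<p} \<and> \<beta> permutes {..<p} \<and> Z1 = reindex_mat \<alpha> \<psi> Z2 \<and> Z2 = reindex_mat \<beta> \<psi> Z1)"
    (is "_ \<longleftrightarrow> ?rhs")
proof -
  let ?Q = "transpose_mat (perm_matrix q \<psi>)"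
  have "perm_mat q ?Q"
    using \<psi> perm_mat_iff_transpose by blast
  then have "(\<exists>P1 P2. (P1, P2, ?Q) \<in> R_set p q Z1 Z2) \<longleftrightarrow>
      (\<exists>\<alpha> \<beta>. \<alpha> permutes {..<p} \<and> \<beta> permutes {..<p} \<and>
        Z1 = perm_matrix p \<alpha> * Z2 * ?Q \<and> Z2 = perm_matrix p \<beta> * Z1 * ?Q)"
    unfolding R_set_def by (simp add: perm_mat_iff) blast
  also have "\<dots> \<longleftrightarrow> ?rhs"
    by (intro ex_cong1 conj_cong refl) (simp_all add: perm_matrix_sandwich \<psi> Z)
  finally show ?thesis .
qed

lemma ex_L_set_iff:
  assumes \<rho>: "\<rho> permutes {..<p}" and Z: "Z1 \<in> carrier_mat p q" "Z2 \<in> carrier_mat p q"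
  shows "(\<exists>Q1 Q2. (perm_matrix p \<rho>, Q1, Q2) \<in> L_set p q Z1 Z2) \<longleftrightarrow>
    (\<exists>\<gamma> \<delta>. \<gamma> permutes {..<q} \<and> \<delta> permutes {..<q} \<and> Z1 = reindex_mat \<rho> \<gamma> Z1 \<and> Z2 = reindex_mat \<rho> \<delta> Z2)"
    (is "_ \<longleftrightarrow> ?rhs")
proof -
  have "perm_mat p (perm_matrix p \<rho>)"
    using \<rho> perm_mat_iff by blast
  then have "(\<exists>Q1 Q2. (perm_matrix p \<rho>, Q1, Q2) \<in> L_set p q Z1 Z2) \<longleftrightarrow>
      (\<exists>\<gamma> \<delta>. \<gamma> permutes {..<q} \<and> \<delta> permutes {..<q} \<and>
        Z1 = perm_matrix p \<rho> * Z1 * transpose_mat (perm_matrix q \<gamma>) \<and>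
        Z2 = perm_matrix p \<rho> * Z2 * transpose_mat (perm_matrix q \<delta>))"
    unfolding L_set_def by (simp add: perm_mat_iff_transpose) blast
  also have "\<dots> \<longleftrightarrow> ?rhs"
    by (intro ex_cong1 conj_cong refl) (simp_all add: perm_matrix_sandwich \<rho> Z)
  finally show ?thesis .
qed

(* Alternatives (i) and (ii) of fixability, with the permutation matrices P and Q of Y = P Y Q
   represented by the row permutation \<rho> and the column permutation \<psi>. *)
definition swap_rows_compatible ::
  "nat \<Rightarrow> nat \<Rightarrow> (nat \<Rightarrow> nat) \<Rightarrow> (nat \<Rightarrow> nat) \<Rightarrow> 'a mat \<Rightarrow> 'a mat \<Rightarrow> 'a mat \<Rightarrow> 'a mat \<Rightarrow> bool" where
  "swap_rows_compatible k1 k2 \<rho> \<psi> X1 X2 X3 X4 \<longleftrightarrow>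
    (\<exists>\<alpha> \<beta>. \<alpha> permutes {..<k1} \<and> \<beta> permutes {..<k1} \<and> X1 = reindex_mat \<alpha> \<psi> X2 \<and> X2 = reindex_mat \<beta> \<psi> X1) \<and>
    (\<exists>\<gamma> \<delta>. \<gamma> permutes {..<k2} \<and> \<delta> permutes {..<k2} \<and> X3 = reindex_mat \<rho> \<gamma> X3 \<and> X4 = reindex_mat \<rho> \<delta> X4)"

definition swap_cols_compatible ::
  "nat \<Rightarrow> nat \<Rightarrow> (nat \<Rightarrow> nat) \<Rightarrow> (nat \<Rightarrow> nat) \<Rightarrow> 'a mat \<Rightarrow> 'a mat \<Rightarrow> 'a mat \<Rightarrow> 'a mat \<Rightarrow> bool" where
  "swap_cols_compatible k1 k2 \<rho> \<psi> X1 X2 X3 X4 \<longleftrightarrow>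
    (\<exists>\<gamma> \<delta>. \<gamma> permutes {..<k2} \<and> \<delta> permutes {..<k2} \<and> X3 = reindex_mat \<rho> \<gamma> X4 \<and> X4 = reindex_mat \<rho> \<delta> X3) \<and>
    (\<exists>\<alpha> \<beta>. \<alpha> permutes {..<k1} \<and> \<beta> permutes {..<k1} \<and> X1 = reindex_mat \<alpha> \<psi> X1 \<and> X2 = reindex_mat \<beta> \<psi> X2)"

lemma fixable_iff_reindex_mat:
  assumes X12: "X1 \<in> carrier_mat k1 c" "X2 \<in> carrier_mat k1 c"
    and X34: "X3 \<in> carrier_mat r k2" "X4 \<in> carrier_mat r k2" and Y: "Y \<in> carrier_mat r c"
  shows "fixable k1 k2 r c X1 X2 X3 X4 Y \<longleftrightarrow>
    (\<exists>\<rho> \<psi>. \<rho> permutes {..<r} \<and> \<psi> permutes {..<c} \<and> Y = reindex_mat \<rho> \<psi> Y \<and>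
      (swap_rows_compatible k1 k2 \<rho> \<psi> X1 X2 X3 X4 \<or> swap_cols_compatible k1 k2 \<rho> \<psi> X1 X2 X3 X4))"
    (is "_ \<longleftrightarrow> ?rhs")
proof -
  have "fixable k1 k2 r c X1 X2 X3 X4 Y \<longleftrightarrow>
    (\<exists>\<rho> \<psi>. \<rho> permutes {..<r} \<and> \<psi> permutes {..<c} \<and> Y = perm_matrix r \<rho> * Y * transpose_mat (perm_matrix c \<psi>) \<and>
      ((\<exists>P1 P2. (P1, P2, transpose_mat (perm_matrix c \<psi>)) \<in> R_set k1 c X1 X2) \<and>
       (\<exists>Q3 Q4. (perm_matrix r \<rho>, Q3, Q4) \<in> L_set r k2 X3 X4) \<or>
       (\<exists>Q3 Q4. (Q3, Q4, transpose_mat (perm_matrix r \<rho>)) \<in> R_set k2 r (transpose_mat X3) (transpose_mat X4)) \<and>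
       (\<exists>P1 P2. (perm_matrix c \<psi>, P1, P2) \<in> L_set c k1 (transpose_mat X1) (transpose_mat X2))))"
    unfolding fixable_def perm_mat_iff[of r] perm_mat_iff_transpose[of c] by fastforce
  also have "\<dots> \<longleftrightarrow> ?rhs"
  proof -
    have X34t: "transpose_mat X3 \<in> carrier_mat k2 r" "transpose_mat X4 \<in> carrier_mat k2 r"
      and X12t: "transpose_mat X1 \<in> carrier_mat c k1" "transpose_mat X2 \<in> carrier_mat c k1"
      using X12 X34 by auto
    have Y_iff: "Y = perm_matrix r \<rho> * Y * transpose_mat (perm_matrix c \<psi>) \<longleftrightarrow> Y = reindex_mat \<rho> \<psi> Y"
      if "\<rho> permutes {..<r}" "\<psi> permutes {..<c}" for \<rho> \<psi>
      by (simp add: perm_matrix_sandwich[OF that Y])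
    have R_iff: "(\<exists>Q3 Q4. (Q3, Q4, transpose_mat (perm_matrix r \<rho>)) \<in> R_set k2 r (transpose_mat X3) (transpose_mat X4))
        \<longleftrightarrow> (\<exists>\<gamma> \<delta>. \<gamma> permutes {..<k2} \<and> \<delta> permutes {..<k2} \<and> X3 = reindex_mat \<rho> \<gamma> X4 \<and> X4 = reindex_mat \<rho> \<delta> X3)"
      if \<rho>: "\<rho> permutes {..<r}" for \<rho>
      unfolding ex_R_set_iff[OF \<rho> X34t]
      using transpose_eq_reindex_mat_iff[OF \<rho> _ X34(1)] transpose_eq_reindex_mat_iff[OF \<rho> _ X34(2)] by blast
    have L_iff: "(\<exists>P1 P2. (perm_matrix c \<psi>, P1, P2) \<in> L_set c k1 (transpose_mat X1) (transpose_mat X2))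
        \<longleftrightarrow> (\<exists>\<alpha> \<beta>. \<alpha> permutes {..<k1} \<and> \<beta> permutes {..<k1} \<and> X1 = reindex_mat \<alpha> \<psi> X1 \<and> X2 = reindex_mat \<beta> \<psi> X2)"
      if \<psi>: "\<psi> permutes {..<c}" for \<psi>
      unfolding ex_L_set_iff[OF \<psi> X12t]
      using transpose_eq_reindex_mat_iff[OF _ \<psi> X12(1)] transpose_eq_reindex_mat_iff[OF _ \<psi> X12(2)] by blast
    show ?thesis
      by (intro ex_cong1) (simp only: Y_iff R_iff L_iff ex_R_set_iff[OF _ X12] ex_L_set_iff[OF _ X34]
        swap_rows_compatible_def swap_cols_compatible_def cong: conj_cong)
  qed
  finally show ?thesis .
qed

section \<open>Eigenvectors of a simple eigenvalue\<close>

lemma (in vec_space) not_lin_dep_pair: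
  assumes u: "u \<in> carrier_vec n" "u \<noteq> 0\<^sub>v n" and v: "v \<in> carrier_vec n"
    and not_parallel: "\<forall>a. v \<noteq> a \<cdot>\<^sub>v u"
  shows "\<not> lin_dep {u, v}"
proof (rule finite_lin_indpt2)
  have "u \<noteq> v"
    using not_parallel[rule_format, of 1] u by auto
  fix a assume lc0: "lincomb a {u, v} = 0\<^sub>v n"
  have comb: "a u * u $ i + a v * v $ i = 0" if i: "i < n" for i
    using arg_cong[OF lc0, of "\<lambda>x. x $ i"] lincomb_index[OF i, of "{u, v}" a] u v i \<open>u \<noteq> v\<close>
    by simp
  have "a v = 0"
  proof (rule ccontr)
    assume "a v \<noteq> 0"
    then have "v = (- a u / a v) \<cdot>\<^sub>v u"
      using comb u v by (intro eq_vecI) (auto simp: field_simps add_eq_0_iff)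
    then show False using not_parallel by blast
  qed
  moreover have "a u = 0"
  proof (rule ccontr)
    assume "a u \<noteq> 0"
    then have "u = 0\<^sub>v n" using comb \<open>a v = 0\<close> u by (intro eq_vecI) simp_all
    then show False using u by simp
  qed
  ultimately show "\<forall>x\<in>{u, v}. a x = 0" by simp
qed (use u v in auto)

lemma two_le_order_char_poly_if_not_parallel:
  fixes M :: "complex mat"
  assumes M: "M \<in> carrier_mat n n"
    and u: "eigenvector M u ev" and v: "eigenvector M v ev" and not_parallel: "\<forall>a. v \<noteq> a \<cdot>\<^sub>v u"
  shows "2 \<le> order ev (char_poly M)"
proof -
  obtain as where "char_poly M = (\<Prod>a\<leftarrow>as. [:- a, 1:])"
    using fundamental_theorem_algebra_factorized[of "char_poly M"] degree_monic_char_poly[OF M]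
    by (metis smult_1_left)
  from jordan_nf_exists[OF M this] obtain n_as where jnf: "jordan_nf M n_as" by auto
  let ?C = "char_matrix M ev"
  have C: "?C \<in> carrier_mat n n" using M by simp
  interpret K: kernel n n ?C by unfold_locales (rule C)
  have in_kernel: "x \<in> mat_kernel ?C" if "eigenvector M x ev" for x
    using that eigenvector_char_matrix[OF M] by (auto intro: mat_kernelI[OF C])
  have "\<not> K.NC.lin_dep {u, v}"
    using u v M not_parallel unfolding eigenvector_def by (intro K.NC.not_lin_dep_pair) auto
  then have indep: "\<not> K.Ker.lin_dep {u, v}"
    using K.lindep_same in_kernel[OF u] in_kernel[OF v] by auto
  obtain Bs where "finite Bs" "K.Ker.basis Bs" using kernel_basis_exists[OF C] by auto
  then have "K.Ker.fin_dim" unfolding K.Ker.fin_dim_def K.Ker.basis_def by auto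
  then have "card {u, v} \<le> K.Ker.dim"
    using K.Ker.li_le_dim(2) indep in_kernel[OF u] in_kernel[OF v] by auto
  moreover have "u \<noteq> v"
    using not_parallel[rule_format, of 1] u M unfolding eigenvector_def by auto
  ultimately have "2 \<le> K.Ker.dim" by simp
  also have "K.Ker.dim = dim_gen_eigenspace M ev 1"
    unfolding dim_gen_eigenspace_def using C by simp
  also have "\<dots> = sum_list (map (min 1) (map fst (filter (\<lambda>(n, e). e = ev) n_as)))"
    by (rule dim_gen_eigenspace[OF jnf])
  also have "\<dots> \<le> sum_list (map fst (filter (\<lambda>(n, e). e = ev) n_as))"
    by (induct n_as) auto
  also have "\<dots> = order ev (char_poly M)"
    unfolding jordan_nf_order[OF jnf] by (induct n_as) auto
  finally show ?thesis .
qed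

lemma eigenvectors_parallel_if_order_le_1:
  fixes M :: "real mat"
  assumes M: "M \<in> carrier_mat n n" and simple: "order ev (char_poly M) \<le> 1"
    and u: "eigenvector M u ev" and v: "eigenvector M v ev"
  shows "\<exists>a. v = a \<cdot>\<^sub>v u"
proof (rule ccontr)
  assume not_parallel: "\<nexists>a. v = a \<cdot>\<^sub>v u"
  have uc: "u \<in> carrier_vec n" and vc: "v \<in> carrier_vec n"
    using u v M unfolding eigenvector_def by auto
  obtain i where i: "i < n" and ui: "u $ i \<noteq> 0"
    using u M unfolding eigenvector_def by (metis carrier_matD(1) carrier_vecD eq_vecI index_zero_vec)
  have "\<forall>a. (of_real_hom.vec_hom v :: complex vec) \<noteq> a \<cdot>\<^sub>v of_real_hom.vec_hom u"
  proof (intro allI notI)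
    fix a :: complex assume eq: "of_real_hom.vec_hom v = a \<cdot>\<^sub>v of_real_hom.vec_hom u"
    have eq_j: "complex_of_real (v $ j) = a * complex_of_real (u $ j)" if "j < n" for j
      using arg_cong[OF eq, of "\<lambda>x. x $ j"] that uc vc by simp
    have "a = complex_of_real (v $ i / u $ i)"
      using eq_j[OF i] ui by (simp add: field_simps)
    then have "complex_of_real (v $ j) = complex_of_real (v $ i / u $ i * u $ j)" if "j < n" for j
      using eq_j[OF that] by simp
    then have "v $ j = v $ i / u $ i * u $ j" if "j < n" for j
      using that of_real_eq_iff by blast
    then have "v = (v $ i / u $ i) \<cdot>\<^sub>v u"
      using uc vc by (intro eq_vecI) auto
    then show False using not_parallel by blast
  qed
  then have "2 \<le> order (complex_of_real ev) (char_poly (of_real_hom.mat_hom M))"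
    using two_le_order_char_poly_if_not_parallel[OF _ of_real_hom.eigenvector_hom[OF M u] of_real_hom.eigenvector_hom[OF M v]] M
    by simp
  also have "\<dots> = order ev (char_poly M)"
    unfolding of_real_hom.char_poly_hom[OF M] by (rule map_poly_inj_idom_divide_hom.order_hom) unfold_locales
  finally show False using simple by simp
qed

section \<open>Permutations respecting a block decomposition\<close>

lemma less_add3_cases:
  fixes i :: nat
  assumes "i < a1 + a2 + a3"
  obtains "i < a1" | i' where "i = a1 + i'" "i' < a2" | i' where "i = a1 + a2 + i'" "i' < a3"
proof -
  consider "i < a1" | "a1 \<le> i" "i < a1 + a2" | "a1 + a2 \<le> i" by linarith
  then show thesis
  proof cases
    case 2 then show thesis using that(2)[of "i - a1"] by simp
  next
    case 3 then show thesis using that(3)[of "i - a1 - a2"] assms by simp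
  qed (use that(1) in simp)
qed

definition block_perm3 ::
  "nat \<Rightarrow> nat \<Rightarrow> nat \<Rightarrow> (nat \<Rightarrow> nat) \<Rightarrow> (nat \<Rightarrow> nat) \<Rightarrow> (nat \<Rightarrow> nat) \<Rightarrow> nat \<Rightarrow> nat" where
  "block_perm3 a1 a2 a3 f1 f2 f3 i =
    (if i < a1 then f1 i else if i < a1 + a2 then a1 + f2 (i - a1)
     else if i < a1 + a2 + a3 then a1 + a2 + f3 (i - a1 - a2) else i)"

lemma block_perm3_simps [simp]:
  "i < a1 \<Longrightarrow> block_perm3 a1 a2 a3 f1 f2 f3 i = f1 i"
  "i < a2 \<Longrightarrow> block_perm3 a1 a2 a3 f1 f2 f3 (a1 + i) = a1 + f2 i"
  "i < a3 \<Longrightarrow> block_perm3 a1 a2 a3 f1 f2 f3 (a1 + a2 + i) = a1 + a2 + f3 i"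
  by (simp_all add: block_perm3_def)

lemma block_perm3_less:
  assumes "\<And>i. i < a1 \<Longrightarrow> f1 i < a1" and "\<And>i. i < a2 \<Longrightarrow> f2 i < a2" and "\<And>i. i < a3 \<Longrightarrow> f3 i < a3"
    and i: "i < a1 + a2 + a3"
  shows "block_perm3 a1 a2 a3 f1 f2 f3 i < a1 + a2 + a3"
proof (cases rule: less_add3_cases[OF i])
  case 1
  then show ?thesis using assms(1)[of i] by simp
next
  case (2 i')
  then show ?thesis using assms(2)[of i'] by simp
next
  case (3 i')
  then show ?thesis using assms(3)[of i'] by simp
qed

lemma permutes_block_perm3:
  assumes f1: "f1 permutes {..<a1}" and f2: "f2 permutes {..<a2}" and f3: "f3 permutes {..<a3}"
  shows "block_perm3 a1 a2 a3 f1 f2 f3 permutes {..<a1 + a2 + a3}"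
proof (rule bij_imp_permutes)
  let ?g = "block_perm3 a1 a2 a3 (inv_into UNIV f1) (inv_into UNIV f2) (inv_into UNIV f3)"
  note f1_simps = permutes_inverses[OF f1] permutes_lessThan_iff[OF f1] permutes_lessThan_iff[OF permutes_inv[OF f1]]
  note f2_simps = permutes_inverses[OF f2] permutes_lessThan_iff[OF f2] permutes_lessThan_iff[OF permutes_inv[OF f2]]
  note f3_simps = permutes_inverses[OF f3] permutes_lessThan_iff[OF f3] permutes_lessThan_iff[OF permutes_inv[OF f3]]
  show "bij_betw (block_perm3 a1 a2 a3 f1 f2 f3) {..<a1 + a2 + a3} {..<a1 + a2 + a3}"
  proof (rule bij_betw_byWitness[where f' = ?g])
    show "\<forall>i\<in>{..<a1 + a2 + a3}. ?g (block_perm3 a1 a2 a3 f1 f2 f3 i) = i"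
      by (auto elim!: less_add3_cases simp: f1_simps f2_simps f3_simps)
    show "\<forall>i\<in>{..<a1 + a2 + a3}. block_perm3 a1 a2 a3 f1 f2 f3 (?g i) = i"
      by (auto elim!: less_add3_cases simp: f1_simps f2_simps f3_simps)
    show "block_perm3 a1 a2 a3 f1 f2 f3 ` {..<a1 + a2 + a3} \<subseteq> {..<a1 + a2 + a3}"
      by (auto intro!: block_perm3_less simp: f1_simps f2_simps f3_simps)
    show "?g ` {..<a1 + a2 + a3} \<subseteq> {..<a1 + a2 + a3}"
      by (auto intro!: block_perm3_less simp: f1_simps f2_simps f3_simps)
  qed
qed (simp add: block_perm3_def)

lemma permutes_shift_restrict:
  fixes \<sigma> :: "nat \<Rightarrow> nat"
  assumes "inj \<sigma>" and into: "\<And>i. i < m \<Longrightarrow> b \<le> \<sigma> (a + i) \<and> \<sigma> (a + i) < b + m"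
  shows "(\<lambda>i. if i < m then \<sigma> (a + i) - b else i) permutes {..<m}"
proof (rule inj_imp_permutes)
  show "inj_on (\<lambda>i. if i < m then \<sigma> (a + i) - b else i) {..<m}"
  proof (rule inj_onI)
    fix i j assume i: "i \<in> {..<m}" and j: "j \<in> {..<m}"
      and "(if i < m then \<sigma> (a + i) - b else i) = (if j < m then \<sigma> (a + j) - b else j)"
    then have "\<sigma> (a + i) - b = \<sigma> (a + j) - b" by simp
    then have "\<sigma> (a + i) = \<sigma> (a + j)" using into[of i] into[of j] i j eq_diff_iff by auto
    then show "i = j" using \<open>inj \<sigma>\<close> by (simp add: inj_eq)
  qed
qed (use into in \<open>auto simp: less_diff_conv2 add.commute\<close>)

lemma block_preserving_permutesE:
  assumes F: "F permutes {..<a1 + a2 + a3}"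
    and blocks: "\<And>i. i < a1 + a2 + a3 \<Longrightarrow> (F i < a1 \<longleftrightarrow> i < a1) \<and> (F i < a1 + a2 \<longleftrightarrow> i < a1 + a2)"
  obtains f1 f2 f3 where "f1 permutes {..<a1}" "f2 permutes {..<a2}" "f3 permutes {..<a3}"
    "F = block_perm3 a1 a2 a3 f1 f2 f3"
proof
  have inj: "inj F" using permutes_inj[OF F] .
  have F_less: "F i < a1 + a2 + a3" if "i < a1 + a2 + a3" for i
    using that permutes_lessThan_iff[OF F] by simp
  let ?f1 = "\<lambda>i. if i < a1 then F (0 + i) - 0 else i"
  let ?f2 = "\<lambda>i. if i < a2 then F (a1 + i) - a1 else i"
  let ?f3 = "\<lambda>i. if i < a3 then F (a1 + a2 + i) - (a1 + a2) else i"
  have f1_range: "F i < a1" if "i < a1" for i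
    using blocks[of i] that by simp
  then show "?f1 permutes {..<a1}"
    by (intro permutes_shift_restrict[OF inj]) simp
  have f2_range: "a1 \<le> F (a1 + i) \<and> F (a1 + i) < a1 + a2" if "i < a2" for i
    using blocks[of "a1 + i"] that by simp
  then show "?f2 permutes {..<a2}"
    by (rule permutes_shift_restrict[OF inj])
  have f3_range: "a1 + a2 \<le> F (a1 + a2 + i) \<and> F (a1 + a2 + i) < a1 + a2 + a3" if "i < a3" for i
    using blocks[of "a1 + a2 + i"] F_less[of "a1 + a2 + i"] that by simp
  then show "?f3 permutes {..<a3}"
    by (rule permutes_shift_restrict[OF inj])
  show "F = block_perm3 a1 a2 a3 ?f1 ?f2 ?f3"
  proof
    fix i show "F i = block_perm3 a1 a2 a3 ?f1 ?f2 ?f3 i"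
    proof (cases "i < a1 + a2 + a3")
      case True
      then show ?thesis
        by (cases rule: less_add3_cases) (use f1_range f2_range f3_range in fastforce)+
    next
      case False
      then show ?thesis using permutes_not_in[OF F] by (simp add: block_perm3_def)
    qed
  qed
qed

definition swap_blocks :: "nat \<Rightarrow> nat \<Rightarrow> nat" where
  "swap_blocks a i = (if i < a then a + i else if i < a + a then i - a else i)"

lemma swap_blocks_swap_blocks [simp]: "swap_blocks a (swap_blocks a i) = i"
  by (auto simp: swap_blocks_def)

lemma permutes_swap_blocks: "swap_blocks a permutes {..<a + a + m}"
proof (rule inj_imp_permutes)
  show "inj_on (swap_blocks a) {..<a + a + m}"
    by (metis inj_on_inverseI swap_blocks_swap_blocks)
qed (auto simp: swap_blocks_def)

lemma swap_blocks_simps [simp]: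
  "i < a \<Longrightarrow> swap_blocks a i = a + i"
  "i < a \<Longrightarrow> swap_blocks a (a + i) = i"
  "swap_blocks a (a + a + i) = a + a + i"
  by (simp_all add: swap_blocks_def)

definition block_sign :: "nat \<Rightarrow> nat \<Rightarrow> real" where
  "block_sign a i = (if i < a then 1 else if i < a + a then -1 else 0)"

lemma block_sign_swap_blocks [simp]: "block_sign a (swap_blocks a i) = - block_sign a i"
  by (auto simp: block_sign_def swap_blocks_def)

lemma block_sign_invariant_permutesE:
  assumes F: "F permutes {..<a + a + m}"
    and sign: "\<And>i. i < a + a + m \<Longrightarrow> block_sign a (F i) = block_sign a i"
  obtains f g h where "f permutes {..<a}" "g permutes {..<a}" "h permutes {..<m}"
    "F = block_perm3 a a m f g h"
proof (rule block_preserving_permutesE[OF F])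
  fix i assume "i < a + a + m"
  then show "(F i < a \<longleftrightarrow> i < a) \<and> (F i < a + a \<longleftrightarrow> i < a + a)"
    using sign[of i] by (auto simp: block_sign_def split: if_splits)
qed (use that in blast)

lemma block_sign_negating_permutesE:
  assumes F: "F permutes {..<a + a + m}"
    and sign: "\<And>i. i < a + a + m \<Longrightarrow> block_sign a (F i) = - block_sign a i"
  obtains f g h where "f permutes {..<a}" "g permutes {..<a}" "h permutes {..<m}"
    "F = swap_blocks a \<circ> block_perm3 a a m f g h"
proof -
  have "swap_blocks a \<circ> F permutes {..<a + a + m}"
    using permutes_compose[OF F permutes_swap_blocks] .
  moreover have "block_sign a ((swap_blocks a \<circ> F) i) = block_sign a i" if "i < a + a + m" for i
    using sign[OF that] by simp
  ultimately obtain f g h where "f permutes {..<a}" "g permutes {..<a}" "h permutes {..<m}"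
    and "swap_blocks a \<circ> F = block_perm3 a a m f g h"
    by (rule block_sign_invariant_permutesE)
  moreover from this(4) have "F = swap_blocks a \<circ> block_perm3 a a m f g h"
    by (metis comp_apply ext swap_blocks_swap_blocks)
  ultimately show thesis using that by blast
qed

lemma sum_lessThan_add: "(\<Sum>j<a + b. f j) = (\<Sum>j<a. f j) + (\<Sum>j<b. f (a + j :: nat))"
  by (induct b) (simp_all add: add.assoc)

lemma mult_block_sign_vec:
  assumes M: "M \<in> carrier_mat k (a + a + m)" and i: "i < k"
  shows "(M *\<^sub>v vec (a + a + m) (block_sign a)) $ i = (\<Sum>j<a. M $$ (i, j)) - (\<Sum>j<a. M $$ (i, a + j))"
proof -
  have "(M *\<^sub>v vec (a + a + m) (block_sign a)) $ i = (\<Sum>j<a + a + m. M $$ (i, j) * block_sign a j)"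
    using M i by (simp add: scalar_prod_def atLeast0LessThan)
  also have "\<dots> = (\<Sum>j<a. M $$ (i, j)) - (\<Sum>j<a. M $$ (i, a + j))"
    unfolding sum_lessThan_add by (simp add: block_sign_def sum_negf)
  finally show ?thesis .
qed

section \<open>Three-by-three block matrices\<close>

lemma ones_mat_carrier [simp]: "ones_mat p q \<in> carrier_mat p q"
  and index_ones_mat [simp]: "i < p \<Longrightarrow> j < q \<Longrightarrow> ones_mat p q $$ (i, j) = 1"
  by (simp_all add: ones_mat_def)

lemma hcat_carrier: "M \<in> carrier_mat a b1 \<Longrightarrow> N \<in> carrier_mat a b2 \<Longrightarrow> hcat M N \<in> carrier_mat a (b1 + b2)"
  unfolding hcat_def by auto

lemma index_hcat:
  "M \<in> carrier_mat a b1 \<Longrightarrow> N \<in> carrier_mat a b2 \<Longrightarrow> i < a \<Longrightarrow> j < b1 + b2 \<Longrightarrow>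
    hcat M N $$ (i,j) = (if j < b1 then M $$ (i,j) else N $$ (i, j - b1))"
  unfolding hcat_def by auto

lemma index_append_rows:
  "M \<in> carrier_mat a1 b \<Longrightarrow> N \<in> carrier_mat a2 b \<Longrightarrow> i < a1 + a2 \<Longrightarrow> j < b \<Longrightarrow>
    (M @\<^sub>r N) $$ (i,j) = (if i < a1 then M $$ (i,j) else N $$ (i - a1, j))"
  unfolding append_rows_def by auto

context
  fixes a1 a2 a3 b1 b2 b3 :: nat and M11 M12 M13 M21 M22 M23 M31 M32 M33 :: "real mat"
  assumes carrier: "M11 \<in> carrier_mat a1 b1" "M12 \<in> carrier_mat a1 b2" "M13 \<in> carrier_mat a1 b3"
    "M21 \<in> carrier_mat a2 b1" "M22 \<in> carrier_mat a2 b2" "M23 \<in> carrier_mat a2 b3"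
    "M31 \<in> carrier_mat a3 b1" "M32 \<in> carrier_mat a3 b2" "M33 \<in> carrier_mat a3 b3"
begin

private lemma hcat3:
  assumes X: "X \<in> carrier_mat a b1" and Y: "Y \<in> carrier_mat a b2" and Z: "Z \<in> carrier_mat a b3"
  shows "hcat X (hcat Y Z) \<in> carrier_mat a (b1 + b2 + b3)"
    and "i < a \<Longrightarrow> j < b1 + b2 + b3 \<Longrightarrow> hcat X (hcat Y Z) $$ (i,j) =
      (if j < b1 then X $$ (i,j) else if j < b1 + b2 then Y $$ (i, j - b1) else Z $$ (i, j - b1 - b2))"
proof -
  have YZ: "hcat Y Z \<in> carrier_mat a (b2 + b3)" by (rule hcat_carrier[OF Y Z])
  show "hcat X (hcat Y Z) \<in> carrier_mat a (b1 + b2 + b3)"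
    using hcat_carrier[OF X YZ] by (simp only: add.assoc)
  assume i: "i < a" and j: "j < b1 + b2 + b3"
  have "hcat X (hcat Y Z) $$ (i,j) = (if j < b1 then X $$ (i,j) else hcat Y Z $$ (i, j - b1))"
    by (rule index_hcat[OF X YZ i]) (use j in simp)
  also have "\<dots> = (if j < b1 then X $$ (i,j) else if j < b1 + b2 then Y $$ (i, j - b1) else Z $$ (i, j - b1 - b2))"
    using index_hcat[OF Y Z i, of "j - b1"] j by (simp add: less_diff_conv2)
  finally show "hcat X (hcat Y Z) $$ (i,j) =
      (if j < b1 then X $$ (i,j) else if j < b1 + b2 then Y $$ (i, j - b1) else Z $$ (i, j - b1 - b2))" .
qed

lemma block3_carrier:
  "block3 M11 M12 M13 M21 M22 M23 M31 M32 M33 \<in> carrier_mat (a1 + a2 + a3) (b1 + b2 + b3)"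
  unfolding block3_def using hcat3(1)[OF carrier(1-3)] hcat3(1)[OF carrier(4-6)] hcat3(1)[OF carrier(7-9)]
  by (simp add: add.assoc)

private lemma index_block3_rows:
  assumes "i < a1 + a2 + a3" "j < b1 + b2 + b3"
  shows "block3 M11 M12 M13 M21 M22 M23 M31 M32 M33 $$ (i,j) =
    (if i < a1 then hcat M11 (hcat M12 M13) $$ (i,j)
     else if i < a1 + a2 then hcat M21 (hcat M22 M23) $$ (i - a1, j)
     else hcat M31 (hcat M32 M33) $$ (i - a1 - a2, j))"
  unfolding block3_def
  using index_append_rows[OF hcat3(1)[OF carrier(1-3)]
      carrier_append_rows[OF hcat3(1)[OF carrier(4-6)] hcat3(1)[OF carrier(7-9)]], of i j]
    index_append_rows[OF hcat3(1)[OF carrier(4-6)] hcat3(1)[OF carrier(7-9)], of "i - a1" j] assms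
  by (auto simp: add.assoc)

lemma index_block3:
  assumes "i < a1 + a2 + a3" "j < b1 + b2 + b3"
  shows "block3 M11 M12 M13 M21 M22 M23 M31 M32 M33 $$ (i,j) =
    (if i < a1 then
       (if j < b1 then M11 $$ (i, j) else if j < b1 + b2 then M12 $$ (i, j - b1) else M13 $$ (i, j - b1 - b2))
     else if i < a1 + a2 then
       (if j < b1 then M21 $$ (i - a1, j) else if j < b1 + b2 then M22 $$ (i - a1, j - b1)
        else M23 $$ (i - a1, j - b1 - b2))
     else
       (if j < b1 then M31 $$ (i - a1 - a2, j) else if j < b1 + b2 then M32 $$ (i - a1 - a2, j - b1)
        else M33 $$ (i - a1 - a2, j - b1 - b2)))"
  using assms
  by (simp add: index_block3_rows hcat3(2)[OF carrier(1-3)] hcat3(2)[OF carrier(4-6)] hcat3(2)[OF carrier(7-9)])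

end

lemma block3_eq_iff:
  assumes M: "M11 \<in> carrier_mat a1 b1" "M12 \<in> carrier_mat a1 b2" "M13 \<in> carrier_mat a1 b3"
    "M21 \<in> carrier_mat a2 b1" "M22 \<in> carrier_mat a2 b2" "M23 \<in> carrier_mat a2 b3"
    "M31 \<in> carrier_mat a3 b1" "M32 \<in> carrier_mat a3 b2" "M33 \<in> carrier_mat a3 b3"
  and N: "N11 \<in> carrier_mat a1 b1" "N12 \<in> carrier_mat a1 b2" "N13 \<in> carrier_mat a1 b3"
    "N21 \<in> carrier_mat a2 b1" "N22 \<in> carrier_mat a2 b2" "N23 \<in> carrier_mat a2 b3"
    "N31 \<in> carrier_mat a3 b1" "N32 \<in> carrier_mat a3 b2" "N33 \<in> carrier_mat a3 b3"
  shows "block3 M11 M12 M13 M21 M22 M23 M31 M32 M33 = block3 N11 N12 N13 N21 N22 N23 N31 N32 N33 \<longleftrightarrow>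
    M11 = N11 \<and> M12 = N12 \<and> M13 = N13 \<and> M21 = N21 \<and> M22 = N22 \<and> M23 = N23 \<and>
    M31 = N31 \<and> M32 = N32 \<and> M33 = N33"
proof
  assume eq: "block3 M11 M12 M13 M21 M22 M23 M31 M32 M33 = block3 N11 N12 N13 N21 N22 N23 N31 N32 N33"
  have e: "block3 M11 M12 M13 M21 M22 M23 M31 M32 M33 $$ (x, y) = block3 N11 N12 N13 N21 N22 N23 N31 N32 N33 $$ (x, y)"
    for x y using eq by simp
  have e1: "M11 $$ (i, j) = N11 $$ (i, j)" if "i < a1" "j < b1" for i j
    using e[of "i" "j"] that by (simp add: index_block3[OF M] index_block3[OF N])
  have e2: "M12 $$ (i, j) = N12 $$ (i, j)" if "i < a1" "j < b2" for i j
    using e[of "i" "b1 + j"] that by (simp add: index_block3[OF M] index_block3[OF N])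
  have e3: "M13 $$ (i, j) = N13 $$ (i, j)" if "i < a1" "j < b3" for i j
    using e[of "i" "b1 + b2 + j"] that by (simp add: index_block3[OF M] index_block3[OF N])
  have e4: "M21 $$ (i, j) = N21 $$ (i, j)" if "i < a2" "j < b1" for i j
    using e[of "a1 + i" "j"] that by (simp add: index_block3[OF M] index_block3[OF N])
  have e5: "M22 $$ (i, j) = N22 $$ (i, j)" if "i < a2" "j < b2" for i j
    using e[of "a1 + i" "b1 + j"] that by (simp add: index_block3[OF M] index_block3[OF N])
  have e6: "M23 $$ (i, j) = N23 $$ (i, j)" if "i < a2" "j < b3" for i j
    using e[of "a1 + i" "b1 + b2 + j"] that by (simp add: index_block3[OF M] index_block3[OF N])
  have e7: "M31 $$ (i, j) = N31 $$ (i, j)" if "i < a3" "j < b1" for i j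
    using e[of "a1 + a2 + i" "j"] that by (simp add: index_block3[OF M] index_block3[OF N])
  have e8: "M32 $$ (i, j) = N32 $$ (i, j)" if "i < a3" "j < b2" for i j
    using e[of "a1 + a2 + i" "b1 + j"] that by (simp add: index_block3[OF M] index_block3[OF N])
  have e9: "M33 $$ (i, j) = N33 $$ (i, j)" if "i < a3" "j < b3" for i j
    using e[of "a1 + a2 + i" "b1 + b2 + j"] that by (simp add: index_block3[OF M] index_block3[OF N])
  show "M11 = N11 \<and> M12 = N12 \<and> M13 = N13 \<and> M21 = N21 \<and> M22 = N22 \<and> M23 = N23 \<and>
    M31 = N31 \<and> M32 = N32 \<and> M33 = N33"
    using M N e1 e2 e3 e4 e5 e6 e7 e8 e9 by (auto intro!: eq_matI)
qed simp

lemma reindex_mat_block3: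
  assumes M: "M11 \<in> carrier_mat a1 b1" "M12 \<in> carrier_mat a1 b2" "M13 \<in> carrier_mat a1 b3"
    "M21 \<in> carrier_mat a2 b1" "M22 \<in> carrier_mat a2 b2" "M23 \<in> carrier_mat a2 b3"
    "M31 \<in> carrier_mat a3 b1" "M32 \<in> carrier_mat a3 b2" "M33 \<in> carrier_mat a3 b3"
  and f: "f1 permutes {..<a1}" "f2 permutes {..<a2}" "f3 permutes {..<a3}"
  and g: "g1 permutes {..<b1}" "g2 permutes {..<b2}" "g3 permutes {..<b3}"
  shows "reindex_mat (block_perm3 a1 a2 a3 f1 f2 f3) (block_perm3 b1 b2 b3 g1 g2 g3)
      (block3 M11 M12 M13 M21 M22 M23 M31 M32 M33) =
    block3 (reindex_mat f1 g1 M11) (reindex_mat f1 g2 M12) (reindex_mat f1 g3 M13)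
      (reindex_mat f2 g1 M21) (reindex_mat f2 g2 M22) (reindex_mat f2 g3 M23)
      (reindex_mat f3 g1 M31) (reindex_mat f3 g2 M32) (reindex_mat f3 g3 M33)"
    (is "?L = ?R")
proof -
  have L: "?L \<in> carrier_mat (a1 + a2 + a3) (b1 + b2 + b3)" and R: "?R \<in> carrier_mat (a1 + a2 + a3) (b1 + b2 + b3)"
    using block3_carrier[OF M] block3_carrier[OF reindex_mat_carrier_mat[OF M(1)] reindex_mat_carrier_mat[OF M(2)]
      reindex_mat_carrier_mat[OF M(3)] reindex_mat_carrier_mat[OF M(4)] reindex_mat_carrier_mat[OF M(5)]
      reindex_mat_carrier_mat[OF M(6)] reindex_mat_carrier_mat[OF M(7)] reindex_mat_carrier_mat[OF M(8)]
      reindex_mat_carrier_mat[OF M(9)]] by auto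
  note dims = carrier_matD[OF block3_carrier[OF M]] carrier_matD[OF M(1)] carrier_matD[OF M(2)]
    carrier_matD[OF M(3)] carrier_matD[OF M(4)] carrier_matD[OF M(5)] carrier_matD[OF M(6)]
    carrier_matD[OF M(7)] carrier_matD[OF M(8)] carrier_matD[OF M(9)]
  note ranges = permutes_lessThan_iff[OF f(1)] permutes_lessThan_iff[OF f(2)] permutes_lessThan_iff[OF f(3)]
    permutes_lessThan_iff[OF g(1)] permutes_lessThan_iff[OF g(2)] permutes_lessThan_iff[OF g(3)]
  note Rc = reindex_mat_carrier_mat[OF M(1), of f1 g1] reindex_mat_carrier_mat[OF M(2), of f1 g2]
    reindex_mat_carrier_mat[OF M(3), of f1 g3] reindex_mat_carrier_mat[OF M(4), of f2 g1]
    reindex_mat_carrier_mat[OF M(5), of f2 g2] reindex_mat_carrier_mat[OF M(6), of f2 g3]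
    reindex_mat_carrier_mat[OF M(7), of f3 g1] reindex_mat_carrier_mat[OF M(8), of f3 g2]
    reindex_mat_carrier_mat[OF M(9), of f3 g3]
  show ?thesis
  proof (rule eq_matI)
    fix i j assume "i < dim_row ?R" and "j < dim_col ?R"
    then have i: "i < a1 + a2 + a3" and j: "j < b1 + b2 + b3" using R by auto
    let ?F = "block_perm3 a1 a2 a3 f1 f2 f3" and ?G = "block_perm3 b1 b2 b3 g1 g2 g3"
    have Fi: "?F i < a1 + a2 + a3" and Gj: "?G j < b1 + b2 + b3"
      using i j permutes_lessThan_iff[OF permutes_block_perm3[OF f]]
        permutes_lessThan_iff[OF permutes_block_perm3[OF g]] by auto
    show "?L $$ (i, j) = ?R $$ (i, j)"
      unfolding index_block3[OF Rc i j] index_reindex_mat[OF i[folded dims(1)] j[folded dims(2)]]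
        index_block3[OF M Fi Gj]
      by (cases rule: less_add3_cases[OF i]; cases rule: less_add3_cases[OF j]) (simp_all add: dims ranges)
  qed (use L R in auto)
qed

lemma reindex_block3_swap_rows:
  assumes M: "M11 \<in> carrier_mat a b1" "M12 \<in> carrier_mat a b2" "M13 \<in> carrier_mat a b3"
    "M21 \<in> carrier_mat a b1" "M22 \<in> carrier_mat a b2" "M23 \<in> carrier_mat a b3"
    "M31 \<in> carrier_mat m b1" "M32 \<in> carrier_mat m b2" "M33 \<in> carrier_mat m b3"
  shows "reindex_mat (swap_blocks a) id (block3 M11 M12 M13 M21 M22 M23 M31 M32 M33) =
    block3 M21 M22 M23 M11 M12 M13 M31 M32 M33" (is "?L = ?R")
proof (rule eq_matI)
  note M' = M(4-6) M(1-3) M(7-9)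
  fix i j assume "i < dim_row ?R" and "j < dim_col ?R"
  then have i: "i < a + a + m" and j: "j < b1 + b2 + b3" using block3_carrier[OF M'] by auto
  have "swap_blocks a i < a + a + m"
    using i permutes_lessThan_iff[OF permutes_swap_blocks] by blast
  then show "?L $$ (i, j) = ?R $$ (i, j)"
    using carrier_matD[OF block3_carrier[OF M]] i j
    by (cases rule: less_add3_cases[OF i]) (simp_all add: index_block3[OF M] index_block3[OF M'])
qed (use block3_carrier[OF M] block3_carrier[OF M(4-6) M(1-3) M(7-9)] in auto)

lemma reindex_block3_swap_cols:
  assumes M: "M11 \<in> carrier_mat a1 b" "M12 \<in> carrier_mat a1 b" "M13 \<in> carrier_mat a1 m"
    "M21 \<in> carrier_mat a2 b" "M22 \<in> carrier_mat a2 b" "M23 \<in> carrier_mat a2 m"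
    "M31 \<in> carrier_mat a3 b" "M32 \<in> carrier_mat a3 b" "M33 \<in> carrier_mat a3 m"
  shows "reindex_mat id (swap_blocks b) (block3 M11 M12 M13 M21 M22 M23 M31 M32 M33) =
    block3 M12 M11 M13 M22 M21 M23 M32 M31 M33" (is "?L = ?R")
proof (rule eq_matI)
  note M' = M(2) M(1) M(3) M(5) M(4) M(6) M(8) M(7) M(9)
  fix i j assume "i < dim_row ?R" and "j < dim_col ?R"
  then have i: "i < a1 + a2 + a3" and j: "j < b + b + m" using block3_carrier[OF M'] by auto
  have "swap_blocks b j < b + b + m"
    using j permutes_lessThan_iff[OF permutes_swap_blocks] by blast
  then show "?L $$ (i, j) = ?R $$ (i, j)"
    using carrier_matD[OF block3_carrier[OF M]] i j
    by (cases rule: less_add3_cases[OF j]) (simp_all add: index_block3[OF M] index_block3[OF M'])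
qed (use block3_carrier[OF M] block3_carrier[OF M(2) M(1) M(3) M(5) M(4) M(6) M(8) M(7) M(9)] in auto)

lemma reindex_ones_mat:
  "f permutes {..<p} \<Longrightarrow> g permutes {..<q} \<Longrightarrow> reindex_mat f g (ones_mat p q) = ones_mat p q"
  by (intro eq_matI) (auto simp: ones_mat_def permutes_lessThan_iff)

lemma reindex_zero_mat:
  "f permutes {..<p} \<Longrightarrow> g permutes {..<q} \<Longrightarrow> reindex_mat f g (0\<^sub>m p q) = 0\<^sub>m p q"
  by (intro eq_matI) (auto simp: permutes_lessThan_iff)

section \<open>The matrices A and B\<close>

locale block_pair =
  fixes n k1 k2 r c :: nat and X1 X2 X3 X4 Y A B :: "real mat"
  assumes k2_pos: "0 < k2"
    and n_rows: "n = k1 + k1 + r" and n_cols: "n = k2 + k2 + c"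
    and X1: "X1 \<in> carrier_mat k1 c" and X2: "X2 \<in> carrier_mat k1 c"
    and X3: "X3 \<in> carrier_mat r k2" and X4: "X4 \<in> carrier_mat r k2" and Y: "Y \<in> carrier_mat r c"
    and col_sums: "transpose_mat X1 *\<^sub>v ones_vec k1 = transpose_mat X2 *\<^sub>v ones_vec k1"
    and row_sums: "X3 *\<^sub>v ones_vec k2 = X4 *\<^sub>v ones_vec k2"
    and A_def: "A = block3 (0\<^sub>m k1 k2) (ones_mat k1 k2) X1 (ones_mat k1 k2) (0\<^sub>m k1 k2) X2 X3 X4 Y"
    and B_def: "B = block3 (ones_mat k1 k2) (0\<^sub>m k1 k2) X1 (0\<^sub>m k1 k2) (ones_mat k1 k2) X2 X3 X4 Y"
begin

lemmas A_blocks = zero_carrier_mat ones_mat_carrier X1 ones_mat_carrier zero_carrier_mat X2 X3 X4 Y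

lemmas B_blocks = ones_mat_carrier zero_carrier_mat X1 zero_carrier_mat ones_mat_carrier X2 X3 X4 Y

lemma A_carrier: "A \<in> carrier_mat (k1 + k1 + r) (k2 + k2 + c)"
  unfolding A_def by (rule block3_carrier[OF A_blocks])

lemma B_carrier: "B \<in> carrier_mat (k1 + k1 + r) (k2 + k2 + c)"
  unfolding B_def by (rule block3_carrier[OF B_blocks])

lemma A_square: "A \<in> carrier_mat n n" and B_square: "B \<in> carrier_mat n n"
  using A_carrier B_carrier by (simp_all flip: n_rows n_cols)

lemma row_sums_eq: "i < r \<Longrightarrow> (\<Sum>j<k2. X3 $$ (i, j)) = (\<Sum>j<k2. X4 $$ (i, j))"
  using arg_cong[OF row_sums, of "\<lambda>v. v $ i"] X3 X4
  by (simp add: ones_vec_def scalar_prod_def atLeast0LessThan)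

lemma col_sums_eq: "j < c \<Longrightarrow> (\<Sum>i<k1. X1 $$ (i, j)) = (\<Sum>i<k1. X2 $$ (i, j))"
  using arg_cong[OF col_sums, of "\<lambda>v. v $ j"] X1 X2
  by (simp add: ones_vec_def scalar_prod_def atLeast0LessThan)

definition row_signs :: "real vec" where
  "row_signs = vec n (block_sign k1)"

definition col_signs :: "real vec" where
  "col_signs = vec n (block_sign k2)"

lemma row_signs_carrier [simp]: "row_signs \<in> carrier_vec n" "dim_vec row_signs = n"
  and col_signs_carrier [simp]: "col_signs \<in> carrier_vec n" "dim_vec col_signs = n"
  and index_row_signs [simp]: "i < n \<Longrightarrow> row_signs $ i = block_sign k1 i"
  and index_col_signs [simp]: "i < n \<Longrightarrow> col_signs $ i = block_sign k2 i"
  by (simp_all add: row_signs_def col_signs_def)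

lemma A_mult_col_signs: "A *\<^sub>v col_signs = (- real k2) \<cdot>\<^sub>v row_signs"
proof (rule eq_vecI)
  fix i assume "i < dim_vec ((- real k2) \<cdot>\<^sub>v row_signs)"
  then have "i < n" by simp
  then have i: "i < k1 + k1 + r" by (simp add: n_rows)
  have "(A *\<^sub>v col_signs) $ i = (\<Sum>j<k2. A $$ (i, j)) - (\<Sum>j<k2. A $$ (i, k2 + j))"
    unfolding col_signs_def by (subst n_cols) (rule mult_block_sign_vec[OF A_carrier i])
  also have "\<dots> = - real k2 * block_sign k1 i"
    using row_sums_eq
    by (cases rule: less_add3_cases[OF i])
      (simp_all add: A_def index_block3[OF A_blocks] block_sign_def)
  finally show "(A *\<^sub>v col_signs) $ i = ((- real k2) \<cdot>\<^sub>v row_signs) $ i"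
    using \<open>i < n\<close> by simp
qed (use A_square in simp)

lemma B_mult_col_signs: "B *\<^sub>v col_signs = real k2 \<cdot>\<^sub>v row_signs"
proof (rule eq_vecI)
  fix i assume "i < dim_vec (real k2 \<cdot>\<^sub>v row_signs)"
  then have "i < n" by simp
  then have i: "i < k1 + k1 + r" by (simp add: n_rows)
  have "(B *\<^sub>v col_signs) $ i = (\<Sum>j<k2. B $$ (i, j)) - (\<Sum>j<k2. B $$ (i, k2 + j))"
    unfolding col_signs_def by (subst n_cols) (rule mult_block_sign_vec[OF B_carrier i])
  also have "\<dots> = real k2 * block_sign k1 i"
    using row_sums_eq
    by (cases rule: less_add3_cases[OF i])
      (simp_all add: B_def index_block3[OF B_blocks] block_sign_def)
  finally show "(B *\<^sub>v col_signs) $ i = (real k2 \<cdot>\<^sub>v row_signs) $ i"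
    using \<open>i < n\<close> by simp
qed (use B_square in simp)

lemma transpose_A_mult_row_signs: "transpose_mat A *\<^sub>v row_signs = (- real k1) \<cdot>\<^sub>v col_signs"
proof (rule eq_vecI)
  fix j assume "j < dim_vec ((- real k1) \<cdot>\<^sub>v col_signs)"
  then have "j < n" by simp
  then have j: "j < k2 + k2 + c" by (simp add: n_cols)
  have At: "transpose_mat A \<in> carrier_mat (k2 + k2 + c) (k1 + k1 + r)" using A_carrier by simp
  have "(transpose_mat A *\<^sub>v row_signs) $ j = (\<Sum>i<k1. A $$ (i, j)) - (\<Sum>i<k1. A $$ (k1 + i, j))"
    unfolding row_signs_def using mult_block_sign_vec[OF At j] A_carrier j by (subst n_rows) simp
  also have "\<dots> = - real k1 * block_sign k2 j"
    using col_sums_eq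
    by (cases rule: less_add3_cases[OF j])
      (simp_all add: A_def index_block3[OF A_blocks] block_sign_def)
  finally show "(transpose_mat A *\<^sub>v row_signs) $ j = ((- real k1) \<cdot>\<^sub>v col_signs) $ j"
    using \<open>j < n\<close> by simp
qed (use A_square in simp)

lemma col_signs_eigenvector: "eigenvector (transpose_mat A * A) col_signs (real k1 * real k2)"
proof -
  have col: "col_signs \<in> carrier_vec n" and row: "row_signs \<in> carrier_vec n"
    by simp_all
  have "0 < n" using k2_pos n_cols by simp
  then have "col_signs $ 0 \<noteq> 0" using k2_pos by (simp add: block_sign_def)
  then have "col_signs \<noteq> 0\<^sub>v n" using \<open>0 < n\<close> by (metis index_zero_vec(1))
  moreover have "(transpose_mat A * A) *\<^sub>v col_signs = (real k1 * real k2) \<cdot>\<^sub>v col_signs"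
    using A_square col row
    by (simp add: A_mult_col_signs mult_mat_vec transpose_A_mult_row_signs smult_smult_assoc mult.commute)
  ultimately show ?thesis
    using col A_square unfolding eigenvector_def by simp
qed

lemma reindexed_col_signs_eigenvector:
  assumes \<pi>: "\<pi> permutes {..<n}" and \<phi>: "\<phi> permutes {..<n}" and BA: "B = reindex_mat \<pi> \<phi> A"
    and gram: "transpose_mat A * A = transpose_mat B * B"
  shows "eigenvector (transpose_mat A * A) (vec n (\<lambda>j. col_signs $ \<phi> j)) (real k1 * real k2)"
proof -
  let ?G = "transpose_mat A * A" and ?x = "vec n (\<lambda>j. col_signs $ \<phi> j)"
  have G: "?G \<in> carrier_mat n n" using A_square by simp
  have \<phi>_less: "\<phi> j < n" if "j < n" for j using that permutes_lessThan_iff[OF \<phi>] by simp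
  have "reindex_mat \<phi> \<phi> ?G = ?G"
    using transpose_reindex_mat_mult_self[OF A_square \<pi> \<phi>] gram BA by simp
  then have "?G *\<^sub>v ?x = vec n (\<lambda>j. (?G *\<^sub>v col_signs) $ \<phi> j)"
    using reindex_mat_mult_vec[OF G col_signs_carrier(1) \<phi> \<phi>] by simp
  also have "\<dots> = (real k1 * real k2) \<cdot>\<^sub>v ?x"
    using col_signs_eigenvector \<phi>_less unfolding eigenvector_def by (auto intro!: eq_vecI)
  finally have "?G *\<^sub>v ?x = (real k1 * real k2) \<cdot>\<^sub>v ?x" .
  moreover obtain j0 where "j0 < n" "\<phi> j0 = 0"
    using k2_pos n_cols permutes_surj[OF \<phi>] permutes_lessThan_iff[OF \<phi>] by (metis add_gr_0 surjD)
  then have "?x $ j0 \<noteq> 0" using k2_pos by (simp add: block_sign_def)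
  then have "?x \<noteq> 0\<^sub>v n" using \<open>j0 < n\<close> by (metis index_zero_vec(1))
  ultimately show ?thesis
    using G A_square unfolding eigenvector_def by simp
qed

lemma reindexing_respects_signs:
  assumes \<pi>: "\<pi> permutes {..<n}" and \<phi>: "\<phi> permutes {..<n}" and BA: "B = reindex_mat \<pi> \<phi> A"
    and gram: "transpose_mat A * A = transpose_mat B * B"
    and simple: "order (real k1 * real k2) (char_poly (transpose_mat A * A)) \<le> 1"
  obtains (keep_cols) "\<And>j. j < n \<Longrightarrow> block_sign k2 (\<phi> j) = block_sign k2 j"
      "\<And>i. i < n \<Longrightarrow> block_sign k1 (\<pi> i) = - block_sign k1 i"
    | (swap_cols) "\<And>j. j < n \<Longrightarrow> block_sign k2 (\<phi> j) = - block_sign k2 j"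
      "\<And>i. i < n \<Longrightarrow> block_sign k1 (\<pi> i) = block_sign k1 i"
proof -
  let ?x = "vec n (\<lambda>j. col_signs $ \<phi> j)"
  have G: "transpose_mat A * A \<in> carrier_mat n n" using A_square by simp
  obtain a where xa: "?x = a \<cdot>\<^sub>v col_signs"
    using eigenvectors_parallel_if_order_le_1[OF G simple col_signs_eigenvector
        reindexed_col_signs_eigenvector[OF \<pi> \<phi> BA gram]] by blast
  have cols: "block_sign k2 (\<phi> j) = a * block_sign k2 j" if "j < n" for j
    using arg_cong[OF xa, of "\<lambda>v. v $ j"] that permutes_lessThan_iff[OF \<phi>] by simp
  have rows: "block_sign k1 (\<pi> i) = - a * block_sign k1 i" if i: "i < n" for i
  proof -
    have "B *\<^sub>v ?x = vec n (\<lambda>i. (A *\<^sub>v col_signs) $ \<pi> i)"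
      unfolding BA by (rule reindex_mat_mult_vec[OF A_square col_signs_carrier(1) \<pi> \<phi>])
    then have "(B *\<^sub>v ?x) $ i = - real k2 * block_sign k1 (\<pi> i)"
      using i permutes_lessThan_iff[OF \<pi>] by (simp add: A_mult_col_signs)
    moreover have "(B *\<^sub>v ?x) $ i = a * real k2 * block_sign k1 i"
      using i B_square by (simp add: xa mult_mat_vec B_mult_col_signs)
    ultimately have "real k2 * block_sign k1 (\<pi> i) = real k2 * (- a * block_sign k1 i)"
      by (simp add: algebra_simps)
    moreover have "real k2 \<noteq> 0" using k2_pos by simp
    ultimately show ?thesis using mult_left_cancel by blast
  qed
  obtain j0 where j0: "j0 < n" "\<phi> j0 = 0"
    using k2_pos n_cols permutes_surj[OF \<phi>] permutes_lessThan_iff[OF \<phi>] by (metis add_gr_0 surjD)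
  then have "a = 1 \<or> a = -1"
    using cols[OF j0(1)] k2_pos by (auto simp: block_sign_def split: if_splits)
  then show thesis
    using that cols rows by auto
qed

lemma B_eq_reindex_swap_rows_iff:
  assumes \<alpha>: "\<alpha> permutes {..<k1}" and \<beta>: "\<beta> permutes {..<k1}" and \<rho>: "\<rho> permutes {..<r}"
    and \<gamma>: "\<gamma> permutes {..<k2}" and \<delta>: "\<delta> permutes {..<k2}" and \<psi>: "\<psi> permutes {..<c}"
  shows "B = reindex_mat (swap_blocks k1 \<circ> block_perm3 k1 k1 r \<alpha> \<beta> \<rho>) (block_perm3 k2 k2 c \<gamma> \<delta> \<psi>) A \<longleftrightarrow>
    Y = reindex_mat \<rho> \<psi> Y \<and> X1 = reindex_mat \<alpha> \<psi> X2 \<and> X2 = reindex_mat \<beta> \<psi> X1 \<and>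
    X3 = reindex_mat \<rho> \<gamma> X3 \<and> X4 = reindex_mat \<rho> \<delta> X4"
proof -
  let ?F = "block_perm3 k1 k1 r \<alpha> \<beta> \<rho>" and ?G = "block_perm3 k2 k2 c \<gamma> \<delta> \<psi>"
  have "reindex_mat (swap_blocks k1 \<circ> ?F) ?G A = reindex_mat ?F ?G (reindex_mat (swap_blocks k1) id A)"
    using A_carrier permutes_lessThan_iff[OF permutes_block_perm3[OF \<alpha> \<beta> \<rho>]]
      permutes_lessThan_iff[OF permutes_block_perm3[OF \<gamma> \<delta> \<psi>]]
    by (subst reindex_mat_reindex_mat) auto
  also have "reindex_mat (swap_blocks k1) id A = block3 (ones_mat k1 k2) (0\<^sub>m k1 k2) X2 (0\<^sub>m k1 k2) (ones_mat k1 k2) X1 X3 X4 Y"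
    unfolding A_def by (rule reindex_block3_swap_rows[OF A_blocks])
  also have "reindex_mat ?F ?G \<dots> = block3 (ones_mat k1 k2) (0\<^sub>m k1 k2) (reindex_mat \<alpha> \<psi> X2)
      (0\<^sub>m k1 k2) (ones_mat k1 k2) (reindex_mat \<beta> \<psi> X1)
      (reindex_mat \<rho> \<gamma> X3) (reindex_mat \<rho> \<delta> X4) (reindex_mat \<rho> \<psi> Y)"
    (is "_ = ?R")
    using assms by (simp add: reindex_mat_block3[OF B_blocks(1,2) X2 B_blocks(4,5) X1 X3 X4 Y]
      reindex_ones_mat reindex_zero_mat)
  finally have reindexed: "reindex_mat (swap_blocks k1 \<circ> ?F) ?G A = ?R" .
  show ?thesis
    unfolding reindexed B_def using X1 X2 X3 X4 Y
    by (subst block3_eq_iff[OF B_blocks]) auto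
qed

lemma B_eq_reindex_swap_cols_iff:
  assumes \<alpha>: "\<alpha> permutes {..<k1}" and \<beta>: "\<beta> permutes {..<k1}" and \<rho>: "\<rho> permutes {..<r}"
    and \<gamma>: "\<gamma> permutes {..<k2}" and \<delta>: "\<delta> permutes {..<k2}" and \<psi>: "\<psi> permutes {..<c}"
  shows "B = reindex_mat (block_perm3 k1 k1 r \<alpha> \<beta> \<rho>) (swap_blocks k2 \<circ> block_perm3 k2 k2 c \<gamma> \<delta> \<psi>) A \<longleftrightarrow>
    Y = reindex_mat \<rho> \<psi> Y \<and> X3 = reindex_mat \<rho> \<gamma> X4 \<and> X4 = reindex_mat \<rho> \<delta> X3 \<and>
    X1 = reindex_mat \<alpha> \<psi> X1 \<and> X2 = reindex_mat \<beta> \<psi> X2"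
proof -
  let ?F = "block_perm3 k1 k1 r \<alpha> \<beta> \<rho>" and ?G = "block_perm3 k2 k2 c \<gamma> \<delta> \<psi>"
  have "reindex_mat ?F (swap_blocks k2 \<circ> ?G) A = reindex_mat ?F ?G (reindex_mat id (swap_blocks k2) A)"
    using A_carrier permutes_lessThan_iff[OF permutes_block_perm3[OF \<alpha> \<beta> \<rho>]]
      permutes_lessThan_iff[OF permutes_block_perm3[OF \<gamma> \<delta> \<psi>]]
    by (subst reindex_mat_reindex_mat) auto
  also have "reindex_mat id (swap_blocks k2) A = block3 (ones_mat k1 k2) (0\<^sub>m k1 k2) X1 (0\<^sub>m k1 k2) (ones_mat k1 k2) X2 X4 X3 Y"
    unfolding A_def by (rule reindex_block3_swap_cols[OF A_blocks])
  also have "reindex_mat ?F ?G \<dots> = block3 (ones_mat k1 k2) (0\<^sub>m k1 k2) (reindex_mat \<alpha> \<psi> X1)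
      (0\<^sub>m k1 k2) (ones_mat k1 k2) (reindex_mat \<beta> \<psi> X2)
      (reindex_mat \<rho> \<gamma> X4) (reindex_mat \<rho> \<delta> X3) (reindex_mat \<rho> \<psi> Y)"
    (is "_ = ?R")
    using assms by (simp add: reindex_mat_block3[OF B_blocks(1-3) B_blocks(4-6) X4 X3 Y]
      reindex_ones_mat reindex_zero_mat)
  finally have reindexed: "reindex_mat ?F (swap_blocks k2 \<circ> ?G) A = ?R" .
  show ?thesis
    unfolding reindexed B_def using X1 X2 X3 X4 Y
    by (subst block3_eq_iff[OF B_blocks]) auto
qed

lemma isomorphic_imp_fixable:
  assumes gram: "transpose_mat A * A = transpose_mat B * B"
    and simple: "order (real k1 * real k2) (char_poly (transpose_mat A * A)) \<le> 1"
    and "isomorphic n n A B"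
  shows "fixable k1 k2 r c X1 X2 X3 X4 Y"
proof -
  obtain \<pi> \<phi> where \<pi>: "\<pi> permutes {..<n}" and \<phi>: "\<phi> permutes {..<n}" and BA: "B = reindex_mat \<pi> \<phi> A"
    using \<open>isomorphic n n A B\<close> isomorphic_iff_reindex_mat[OF A_square] by blast
  have \<pi>': "\<pi> permutes {..<k1 + k1 + r}" and \<phi>': "\<phi> permutes {..<k2 + k2 + c}"
    using \<pi> \<phi> n_rows n_cols by simp_all
  have "\<exists>\<rho> \<psi>. \<rho> permutes {..<r} \<and> \<psi> permutes {..<c} \<and> Y = reindex_mat \<rho> \<psi> Y \<and>
      (swap_rows_compatible k1 k2 \<rho> \<psi> X1 X2 X3 X4 \<or> swap_cols_compatible k1 k2 \<rho> \<psi> X1 X2 X3 X4)"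
  proof (cases rule: reindexing_respects_signs[OF \<pi> \<phi> BA gram simple, case_names keep_cols swap_cols])
    case keep_cols
    obtain \<gamma> \<delta> \<psi> where "\<gamma> permutes {..<k2}" "\<delta> permutes {..<k2}" "\<psi> permutes {..<c}"
      and \<phi>_eq: "\<phi> = block_perm3 k2 k2 c \<gamma> \<delta> \<psi>"
      using block_sign_invariant_permutesE[OF \<phi>'] keep_cols(1) n_cols by metis
    moreover obtain \<alpha> \<beta> \<rho> where "\<alpha> permutes {..<k1}" "\<beta> permutes {..<k1}" "\<rho> permutes {..<r}"
      and \<pi>_eq: "\<pi> = swap_blocks k1 \<circ> block_perm3 k1 k1 r \<alpha> \<beta> \<rho>"
      using block_sign_negating_permutesE[OF \<pi>'] keep_cols(2) n_rows by metis
    ultimately show ?thesis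
      using B_eq_reindex_swap_rows_iff BA unfolding \<phi>_eq \<pi>_eq swap_rows_compatible_def by blast
  next
    case swap_cols
    obtain \<gamma> \<delta> \<psi> where "\<gamma> permutes {..<k2}" "\<delta> permutes {..<k2}" "\<psi> permutes {..<c}"
      and \<phi>_eq: "\<phi> = swap_blocks k2 \<circ> block_perm3 k2 k2 c \<gamma> \<delta> \<psi>"
      using block_sign_negating_permutesE[OF \<phi>'] swap_cols(1) n_cols by metis
    moreover obtain \<alpha> \<beta> \<rho> where "\<alpha> permutes {..<k1}" "\<beta> permutes {..<k1}" "\<rho> permutes {..<r}"
      and \<pi>_eq: "\<pi> = block_perm3 k1 k1 r \<alpha> \<beta> \<rho>"
      using block_sign_invariant_permutesE[OF \<pi>'] swap_cols(2) n_rows by metis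
    ultimately show ?thesis
      using B_eq_reindex_swap_cols_iff BA unfolding \<phi>_eq \<pi>_eq swap_cols_compatible_def by blast
  qed
  then show ?thesis
    using fixable_iff_reindex_mat[OF X1 X2 X3 X4 Y] by blast
qed

lemma fixable_imp_isomorphic:
  assumes "fixable k1 k2 r c X1 X2 X3 X4 Y"
  shows "isomorphic n n A B"
proof -
  obtain \<rho> \<psi> where \<rho>: "\<rho> permutes {..<r}" and \<psi>: "\<psi> permutes {..<c}" and "Y = reindex_mat \<rho> \<psi> Y"
    and "swap_rows_compatible k1 k2 \<rho> \<psi> X1 X2 X3 X4 \<or> swap_cols_compatible k1 k2 \<rho> \<psi> X1 X2 X3 X4"
    using assms fixable_iff_reindex_mat[OF X1 X2 X3 X4 Y] by blast
  then obtain \<alpha> \<beta> \<gamma> \<delta> where perms: "\<alpha> permutes {..<k1}" "\<beta> permutes {..<k1}" "\<gamma> permutes {..<k2}" "\<delta> permutes {..<k2}"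
    and "B = reindex_mat (swap_blocks k1 \<circ> block_perm3 k1 k1 r \<alpha> \<beta> \<rho>) (block_perm3 k2 k2 c \<gamma> \<delta> \<psi>) A \<or>
      B = reindex_mat (block_perm3 k1 k1 r \<alpha> \<beta> \<rho>) (swap_blocks k2 \<circ> block_perm3 k2 k2 c \<gamma> \<delta> \<psi>) A"
    unfolding swap_rows_compatible_def swap_cols_compatible_def
    using B_eq_reindex_swap_rows_iff[OF _ _ \<rho> _ _ \<psi>] B_eq_reindex_swap_cols_iff[OF _ _ \<rho> _ _ \<psi>] by metis
  moreover have "swap_blocks k1 \<circ> block_perm3 k1 k1 r \<alpha> \<beta> \<rho> permutes {..<n}"
    "block_perm3 k1 k1 r \<alpha> \<beta> \<rho> permutes {..<n}"
    using permutes_block_perm3[OF perms(1,2) \<rho>] permutes_swap_blocks n_rows by (auto intro: permutes_compose)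
  moreover have "swap_blocks k2 \<circ> block_perm3 k2 k2 c \<gamma> \<delta> \<psi> permutes {..<n}"
    "block_perm3 k2 k2 c \<gamma> \<delta> \<psi> permutes {..<n}"
    using permutes_block_perm3[OF perms(3,4) \<psi>] permutes_swap_blocks n_cols by (auto intro: permutes_compose)
  ultimately show ?thesis
    unfolding isomorphic_iff_reindex_mat[OF A_square] by blast
qed

end

theorem theorem6p10:
  fixes n k1 k2 r c :: nat
    and X1 X2 X3 X4 Y A B :: "real mat"
  assumes "k1 > 0" and "k2 > 0"
    and "n = 2 * k1 + r" and "n = 2 * k2 + c"
    and "zo_mat k1 c X1" and "zo_mat k1 c X2"
    and "zo_mat r k2 X3" and "zo_mat r k2 X4"
    and "zo_mat r c Y"
    and "transpose_mat X1 *\<^sub>v ones_vec k1 = transpose_mat X2 *\<^sub>v ones_vec k1"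
    and "X3 *\<^sub>v ones_vec k2 = X4 *\<^sub>v ones_vec k2"
    and "A = block3 (0\<^sub>m k1 k2) (ones_mat k1 k2) X1
                    (ones_mat k1 k2) (0\<^sub>m k1 k2) X2
                    X3 X4 Y"
    and "B = block3 (ones_mat k1 k2) (0\<^sub>m k1 k2) X1
                    (0\<^sub>m k1 k2) (ones_mat k1 k2) X2
                    X3 X4 Y"
    and "gram_mates A B"
    and "distinct_singular_values A"
    and "vec_space.rank n (A - B) = 1"
  shows "isomorphic n n A B \<longleftrightarrow> fixable k1 k2 r c X1 X2 X3 X4 Y"
proof -
  interpret block_pair n k1 k2 r c X1 X2 X3 X4 Y A B
    using assms by unfold_locales (auto simp: zo_mat_def)
  have gram: "transpose_mat A * A = transpose_mat B * B"
    using \<open>gram_mates A B\<close> unfolding gram_mates_def by simp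
  have "sv_mult A (sqrt (real k1 * real k2)) \<le> 1"
    using \<open>distinct_singular_values A\<close> unfolding distinct_singular_values_def by simp
  then have simple: "order (real k1 * real k2) (char_poly (transpose_mat A * A)) \<le> 1"
    unfolding sv_mult_def by simp
  show ?thesis
    using isomorphic_imp_fixable[OF gram simple] fixable_imp_isomorphic by blast
qed

end
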